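(* Let $(X,\rho)$ be a metric space, $(M,d)$ a metric space, $Q\ge1$ an integer, $\Omega\subseteq X$ open nonempty and $f\colon\Omega\to\mathcal A_Q(M)$ a function continuous at a point $x\in\Omega\setminus\Lambda$, where $\Lambda=\{z\in\Omega:\ f(z)=Q[\![P]\!]\text{ for some }P\in M\}$. Then there exist positive integers $R,S$ with $Q=R+S$, an open neighborhood $U$ of $x$ and functions $g\colon U\to\mathcal A_R(M)$, $h\colon U\to\mathcal A_S(M)$ such that $f|_U=g+h$ and $\operatorname{Lip} g(x)\le\operatorname{Lip} f(x)$, $\operatorname{Lip} h(x)\le\operatorname{Lip} f(x)$.
   Context: For a metric space $(M,d)$ and positive integer $N$, $\mathcal A_N(M)$ is the set of measures $\sum_{i=1}^N[\![P_i]\!]$ (sums of $N$ Dirac masses at not necessarily distinct points of $M$) with metric $\mathcal G\big(\sum_i[\![A_i]\!],\sum_i[\![B_i]\!]\big)=\min_\sigma\sqrt{\sum_{i=1}^N d(A_i,B_{\sigma(i)})^2}$ over permutations $\sigma$ of $\{1,\dots,N\}$; $g+h$ is the pointwise sum of measures. For a function $u$ from a subset $A$ of $X$ into a metric space with metric $D$, $\operatorname{Lip} u(x)=\limsup_{y\in A,\,y\to x}D(u(y),u(x))/\rho(y,x)$. *)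

theory Defs
  imports "HOL-Analysis.Analysis" "HOL-Library.Multiset"
begin

text \<open>Elements of A_N(M): multisets of points of M of size N (sums of N Dirac masses).\<close>
definition AQ :: "nat \<Rightarrow> 'm multiset set" where
  "AQ N = {T. size T = N}"

definition Gdist :: "'m::metric_space multiset \<Rightarrow> 'm multiset \<Rightarrow> real" where
  "Gdist A B = Inf {sqrt (\<Sum>i<length xs. (dist (xs ! i) (ys ! i))\<^sup>2) | xs ys.
                     mset xs = A \<and> mset ys = B}"

definition Lip :: "('a::metric_space \<Rightarrow> 'b) \<Rightarrow> ('b \<Rightarrow> 'b \<Rightarrow> real) \<Rightarrow> 'a set \<Rightarrow> 'a \<Rightarrow> ereal" where
  "Lip u D A x = Limsup (at x within A) (\<lambda>y. ereal (D (u y) (u x) / dist y x))"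

end

(* Since f x is not a Q-fold point it contains a point p and some point different from p.
   Choose e so small that the e-ball around p contains no other point of f x and the e-ball
   around every point of f x lies either inside or outside the e-ball around p.  Near x,
   f z is G-closer than e to f x, and a pairing of cost below e only pairs points lying on
   the same side of the ball around p.  Restricting such pairings shows that splitting f z
   into its points inside and outside the ball yields g and h of constant sizes with
   G(g z, g x) <= G(f z, f x) and G(h z, h x) <= G(f z, f x), which bounds their pointwise
   Lipschitz constants by that of f. *)

theory Submission
  imports Defs
begin

lemma Limsup_mono_filter: "F \<le> G \<Longrightarrow> Limsup F f \<le> Limsup G f"
  unfolding Limsup_def by (rule INF_superset_mono) (auto dest: filter_leD)

lemma Lip_mono:
  assumes "U \<subseteq> \<Omega>" and "\<forall>y\<in>U. D (g y) (g x) \<le> D (f y) (f x)"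
  shows "Lip g D U x \<le> Lip f D \<Omega> x"
proof -
  have "Lip g D U x \<le> Limsup (at x within U) (\<lambda>y. ereal (D (f y) (f x) / dist y x))"
    unfolding Lip_def using assms(2)
    by (intro Limsup_mono) (auto simp: eventually_at_filter intro!: always_eventually divide_right_mono)
  also have "\<dots> \<le> Lip f D \<Omega> x"
    unfolding Lip_def using assms(1) by (intro Limsup_mono_filter at_le)
  finally show ?thesis .
qed

definition couplings :: "'m multiset \<Rightarrow> 'm multiset \<Rightarrow> ('m \<times> 'm) list set" where
  "couplings A B = {zs. mset (map fst zs) = A \<and> mset (map snd zs) = B}"

definition coupling_cost :: "('m::metric_space \<times> 'm) list \<Rightarrow> real" where
  "coupling_cost zs = sqrt (\<Sum>(p, q)\<leftarrow>zs. (dist p q)\<^sup>2)"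

lemma coupling_cost_nonneg: "coupling_cost zs \<ge> 0"
  unfolding coupling_cost_def by (auto intro!: sum_list_nonneg)

lemma dist_le_coupling_cost:
  assumes "(p, q) \<in> set zs"
  shows "dist p q \<le> coupling_cost zs"
proof -
  have "(dist p q)\<^sup>2 \<le> (\<Sum>(p, q)\<leftarrow>zs. (dist p q)\<^sup>2)"
    using assms by (intro member_le_sum_list) (auto intro: image_eqI[where x = "(p, q)"])
  then show ?thesis
    unfolding coupling_cost_def by (simp add: real_le_rsqrt)
qed

lemma coupling_cost_filter_le: "coupling_cost (filter P zs) \<le> coupling_cost zs"
  unfolding coupling_cost_def by (induction zs) (auto simp: split_beta add_increasing)

lemma size_eq_if_coupling: "zs \<in> couplings A B \<Longrightarrow> size A = size B"
  unfolding couplings_def by auto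

lemma zip_in_couplings:
  assumes "mset xs = A" and "mset ys = B" and "length xs = length ys"
  shows "zip xs ys \<in> couplings A B"
proof -
  have "map fst (zip xs ys) = xs" "map snd (zip xs ys) = ys"
    using assms(3) by simp_all
  with assms(1,2) show ?thesis
    by (simp only: couplings_def mem_Collect_eq)
qed

text \<open>The size hypothesis is needed because \<open>Gdist_def\<close> reads \<open>ys ! i\<close> beyond the end of \<open>ys\<close>
  when \<open>ys\<close> is shorter than \<open>xs\<close>.\<close>

lemma Gdist_eq_Inf_coupling_cost:
  assumes "size A = size B"
  shows "Gdist A B = Inf (coupling_cost ` couplings A B)"
proof -
  have cost_zip: "sqrt (\<Sum>i<length xs. (dist (xs ! i) (ys ! i))\<^sup>2) = coupling_cost (zip xs ys)"
    if "length xs = length ys" for xs ys :: "'a list"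
    using that by (simp add: coupling_cost_def sum_list_sum_nth atLeast0LessThan)
  have "{sqrt (\<Sum>i<length xs. (dist (xs ! i) (ys ! i))\<^sup>2) | xs ys. mset xs = A \<and> mset ys = B}
      = coupling_cost ` couplings A B"
  proof (intro equalityI subsetI)
    fix c
    assume "c \<in> {sqrt (\<Sum>i<length xs. (dist (xs ! i) (ys ! i))\<^sup>2) | xs ys. mset xs = A \<and> mset ys = B}"
    then obtain xs ys where c: "c = sqrt (\<Sum>i<length xs. (dist (xs ! i) (ys ! i))\<^sup>2)"
      and xs: "mset xs = A" and ys: "mset ys = B"
      by blast
    have len: "length xs = length ys"
      using assms unfolding xs[symmetric] ys[symmetric] by simp
    with xs ys have "zip xs ys \<in> couplings A B"
      by (rule zip_in_couplings)
    moreover have "c = coupling_cost (zip xs ys)"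
      unfolding c using len by (rule cost_zip)
    ultimately show "c \<in> coupling_cost ` couplings A B"
      by blast
  next
    fix c
    assume "c \<in> coupling_cost ` couplings A B"
    then obtain zs where c: "c = coupling_cost zs" and zs: "zs \<in> couplings A B"
      by blast
    have "c = coupling_cost (zip (map fst zs) (map snd zs))"
      unfolding c zip_map_fst_snd ..
    also have "\<dots> = sqrt (\<Sum>i<length (map fst zs). (dist (map fst zs ! i) (map snd zs ! i))\<^sup>2)"
      by (rule cost_zip[symmetric]) simp
    finally have "c = sqrt (\<Sum>i<length (map fst zs). (dist (map fst zs ! i) (map snd zs ! i))\<^sup>2)" .
    with zs show "c \<in> {sqrt (\<Sum>i<length xs. (dist (xs ! i) (ys ! i))\<^sup>2) | xs ys. mset xs = A \<and> mset ys = B}"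
      unfolding couplings_def by blast
  qed
  then show ?thesis
    unfolding Gdist_def by simp
qed

lemma Gdist_le_coupling_cost: "zs \<in> couplings A B \<Longrightarrow> Gdist A B \<le> coupling_cost zs"
  unfolding Gdist_eq_Inf_coupling_cost[OF size_eq_if_coupling]
  by (intro cInf_lower bdd_belowI) (auto intro: coupling_cost_nonneg)

lemma Gdist_less_coupling_cost:
  assumes "Gdist A B < c" and "size A = size B"
  obtains zs where "zs \<in> couplings A B" and "coupling_cost zs < c"
proof -
  obtain xs ys where xs: "mset xs = A" and ys: "mset ys = B"
    by (metis ex_mset)
  moreover have "length xs = length ys"
    using assms(2) unfolding xs[symmetric] ys[symmetric] by simp
  ultimately have "couplings A B \<noteq> {}"
    using zip_in_couplings by blast
  then show ?thesis
    using that assms(1) cInf_lessD[of "coupling_cost ` couplings A B" c]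
    unfolding Gdist_eq_Inf_coupling_cost[OF assms(2)] by blast
qed

lemma filter_coupling:
  assumes "zs \<in> couplings A B" and "\<forall>(p, q)\<in>set zs. Pr p \<longleftrightarrow> Pr q"
  shows "filter (\<lambda>(p, q). Pr q) zs \<in> couplings (filter_mset Pr A) (filter_mset Pr B)"
proof -
  have "map fst (filter (\<lambda>(p, q). Pr q) zs) = filter Pr (map fst zs)"
    unfolding filter_map using assms(2) by (intro arg_cong[where f = "map fst"] filter_cong) auto
  moreover have "map snd (filter (\<lambda>(p, q). Pr q) zs) = filter Pr (map snd zs)"
    unfolding filter_map by (intro arg_cong[where f = "map snd"] filter_cong) auto
  ultimately show ?thesis
    using assms(1) unfolding couplings_def by (simp del: mset_map)
qed

lemma cheap_coupling_respects_locally_constant: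
  assumes "zs \<in> couplings A B" and "coupling_cost zs < e"
    and "\<forall>q\<in>#B. \<forall>p. dist p q < e \<longrightarrow> (Pr p \<longleftrightarrow> Pr q)"
  shows "\<forall>(p, q)\<in>set zs. Pr p \<longleftrightarrow> Pr q"
proof clarify
  fix p q
  assume "(p, q) \<in> set zs"
  then have "q \<in># B" and "dist p q < e"
    using assms(1,2) dist_le_coupling_cost[of p q zs] unfolding couplings_def by (force, simp)
  then show "Pr p \<longleftrightarrow> Pr q"
    using assms(3) by blast
qed

lemma size_filter_mset_eq_if_Gdist_less:
  assumes "Gdist A B < e" and "size A = size B"
    and "\<forall>q\<in>#B. \<forall>p. dist p q < e \<longrightarrow> (Pr p \<longleftrightarrow> Pr q)"
  shows "size (filter_mset Pr A) = size (filter_mset Pr B)"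
proof -
  obtain zs where "zs \<in> couplings A B" and "coupling_cost zs < e"
    using Gdist_less_coupling_cost assms(1,2) .
  with assms(3) have "filter (\<lambda>(p, q). Pr q) zs \<in> couplings (filter_mset Pr A) (filter_mset Pr B)"
    by (intro filter_coupling cheap_coupling_respects_locally_constant)
  then show ?thesis
    by (rule size_eq_if_coupling)
qed

lemma Gdist_filter_mset_le:
  assumes "Gdist A B < e" and "size A = size B"
    and "\<forall>q\<in>#B. \<forall>p. dist p q < e \<longrightarrow> (Pr p \<longleftrightarrow> Pr q)"
  shows "Gdist (filter_mset Pr A) (filter_mset Pr B) \<le> Gdist A B"
proof (rule dense_ge_bounded[OF assms(1)])
  fix w
  assume "Gdist A B < w" and "w < e"
  then obtain zs where "zs \<in> couplings A B" and "coupling_cost zs < w"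
    using Gdist_less_coupling_cost assms(2) by blast
  with \<open>w < e\<close> assms(3) have "\<forall>(p, q)\<in>set zs. Pr p \<longleftrightarrow> Pr q"
    by (intro cheap_coupling_respects_locally_constant) auto
  with \<open>zs \<in> couplings A B\<close>
  have "Gdist (filter_mset Pr A) (filter_mset Pr B) \<le> coupling_cost (filter (\<lambda>(p, q). Pr q) zs)"
    by (intro Gdist_le_coupling_cost filter_coupling)
  also have "\<dots> \<le> coupling_cost zs"
    by (rule coupling_cost_filter_le)
  finally show "Gdist (filter_mset Pr A) (filter_mset Pr B) \<le> w"
    using \<open>coupling_cost zs < w\<close> by simp
qed

lemma Lip_filter_mset_le:
  fixes f :: "'a::metric_space \<Rightarrow> 'm::metric_space multiset"
  assumes "U \<subseteq> \<Omega>" and "\<forall>z\<in>U. Gdist (f z) (f x) < e \<and> size (f z) = size (f x)"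
    and "\<forall>q\<in>#f x. \<forall>p. dist p q < e \<longrightarrow> (Pr p \<longleftrightarrow> Pr q)"
  shows "\<forall>z\<in>U. size (filter_mset Pr (f z)) = size (filter_mset Pr (f x))"
    and "Lip (\<lambda>z. filter_mset Pr (f z)) Gdist U x \<le> Lip f Gdist \<Omega> x"
proof -
  have near: "Gdist (f z) (f x) < e" "size (f z) = size (f x)" if "z \<in> U" for z
    using assms(2) that by auto
  show "\<forall>z\<in>U. size (filter_mset Pr (f z)) = size (filter_mset Pr (f x))"
    using size_filter_mset_eq_if_Gdist_less[OF near assms(3)] by blast
  show "Lip (\<lambda>z. filter_mset Pr (f z)) Gdist U x \<le> Lip f Gdist \<Omega> x"
    using Gdist_filter_mset_le[OF near assms(3)] by (intro Lip_mono assms(1)) blast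
qed

lemma not_replicate_mset_obtains_distinct:
  assumes "\<forall>p. A \<noteq> replicate_mset (size A) p"
  obtains p q where "p \<in># A" "q \<in># A" "p \<noteq> q"
proof -
  have "A \<noteq> {#}"
    using assms[rule_format, of undefined] by auto
  then obtain p where "p \<in># A"
    by (rule multiset_nonemptyE)
  moreover have "\<not> set_mset A \<subseteq> {p}"
    using assms[rule_format, of p] set_mset_subset_singletonD[of A p] by blast
  then obtain q where "q \<in># A" "q \<noteq> p"
    by blast
  ultimately show ?thesis
    using that by blast
qed

lemma isolating_radius:
  fixes A :: "'m::metric_space multiset"
  obtains e where "e > 0" and "\<forall>q\<in>#A. dist q p < e \<longleftrightarrow> q = p"
    and "\<forall>q\<in>#A. \<forall>y. dist y q < e \<longrightarrow> (dist y p < e \<longleftrightarrow> dist q p < e)"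
proof -
  obtain \<delta> where "\<delta> > 0" and \<delta>: "\<forall>q\<in>#A. q \<noteq> p \<longrightarrow> \<delta> \<le> dist p q"
    using finite_set_avoid[of "set_mset A" p] by auto
  show ?thesis
  proof (rule that[of "\<delta> / 2"])
    show "\<forall>q\<in>#A. dist q p < \<delta> / 2 \<longleftrightarrow> q = p"
      using \<delta> \<open>\<delta> > 0\<close> by (force simp: dist_commute)
    show "\<forall>q\<in>#A. \<forall>y. dist y q < \<delta> / 2 \<longrightarrow> (dist y p < \<delta> / 2 \<longleftrightarrow> dist q p < \<delta> / 2)"
    proof (intro ballI allI impI)
      fix q y
      assume "q \<in># A" and "dist y q < \<delta> / 2"
      show "dist y p < \<delta> / 2 \<longleftrightarrow> dist q p < \<delta> / 2"
      proof (cases "q = p")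
        case False
        then have "\<delta> \<le> dist p q"
          using \<delta> \<open>q \<in># A\<close> by blast
        moreover have "dist p q \<le> dist y p + dist y q"
          by (rule dist_triangle3)
        ultimately show ?thesis
          using \<open>dist y q < \<delta> / 2\<close> \<open>\<delta> > 0\<close> by (simp add: dist_commute)
      qed (use \<open>dist y q < \<delta> / 2\<close> \<open>\<delta> > 0\<close> in simp)
    qed
  qed (use \<open>\<delta> > 0\<close> in simp)
qed

lemma not_replicate_mset_splits:
  fixes A :: "'m::metric_space multiset"
  assumes "\<forall>p. A \<noteq> replicate_mset (size A) p"
  obtains Pr e where "e > 0" and "size (filter_mset Pr A) > 0" and "size (filter_mset (\<lambda>y. \<not> Pr y) A) > 0"
    and "\<forall>q\<in>#A. \<forall>y. dist y q < e \<longrightarrow> (Pr y \<longleftrightarrow> Pr q)"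
proof -
  obtain p q where "p \<in># A" "q \<in># A" "p \<noteq> q"
    using assms by (rule not_replicate_mset_obtains_distinct)
  obtain e where "e > 0" and near_p: "\<forall>q\<in>#A. dist q p < e \<longleftrightarrow> q = p"
    and const: "\<forall>q\<in>#A. \<forall>y. dist y q < e \<longrightarrow> (dist y p < e \<longleftrightarrow> dist q p < e)"
    by (rule isolating_radius)
  have "p \<in># filter_mset (\<lambda>y. dist y p < e) A" "q \<in># filter_mset (\<lambda>y. \<not> dist y p < e) A"
    using \<open>p \<in># A\<close> \<open>q \<in># A\<close> \<open>p \<noteq> q\<close> near_p by auto
  then have "size (filter_mset (\<lambda>y. dist y p < e) A) > 0" "size (filter_mset (\<lambda>y. \<not> dist y p < e) A) > 0"
    by (auto simp flip: nonempty_has_size)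
  with \<open>e > 0\<close> const show ?thesis
    by (intro that)
qed

theorem corollary3p2:
  fixes \<Omega> :: "'x::metric_space set"
    and f :: "'x \<Rightarrow> 'm::metric_space multiset"
    and Q :: nat and x :: 'x
  assumes "Q \<ge> 1"
    and "open \<Omega>" and "\<Omega> \<noteq> {}"
    and "\<forall>z\<in>\<Omega>. f z \<in> AQ Q"
    and "x \<in> \<Omega>"
    and "\<forall>e>0. \<exists>\<delta>>0. \<forall>z\<in>\<Omega>. dist z x < \<delta> \<longrightarrow> Gdist (f z) (f x) < e"
    and "x \<notin> {z \<in> \<Omega>. \<exists>P. f z = replicate_mset Q P}"
  shows "\<exists>R S U g h. R > 0 \<and> S > 0 \<and> Q = R + S \<and> open U \<and> x \<in> U \<and> U \<subseteq> \<Omega> \<and>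
           (\<forall>z\<in>U. g z \<in> AQ R \<and> h z \<in> AQ S \<and> f z = g z + h z) \<and>
           Lip g Gdist U x \<le> Lip f Gdist \<Omega> x \<and>
           Lip h Gdist U x \<le> Lip f Gdist \<Omega> x"
proof -
  have size_f: "size (f z) = Q" if "z \<in> \<Omega>" for z
    using assms(4) that by (simp add: AQ_def)
  have "\<forall>P. f x \<noteq> replicate_mset (size (f x)) P"
    using assms(5,7) size_f by auto
  then obtain Pr e where "e > 0"
    and sizes: "size (filter_mset Pr (f x)) > 0" "size (filter_mset (\<lambda>y. \<not> Pr y) (f x)) > 0"
    and Pr: "\<forall>q\<in>#f x. \<forall>y. dist y q < e \<longrightarrow> (Pr y \<longleftrightarrow> Pr q)"
    by (rule not_replicate_mset_splits)
  then have not_Pr: "\<forall>q\<in>#f x. \<forall>y. dist y q < e \<longrightarrow> (\<not> Pr y \<longleftrightarrow> \<not> Pr q)"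
    by blast
  obtain \<delta> where "\<delta> > 0" and \<delta>: "\<forall>z\<in>\<Omega>. dist z x < \<delta> \<longrightarrow> Gdist (f z) (f x) < e"
    using assms(6) \<open>e > 0\<close> by blast
  define U where "U = \<Omega> \<inter> ball x \<delta>"
  have "open U" "x \<in> U" "U \<subseteq> \<Omega>"
    using assms(2,5) \<open>\<delta> > 0\<close> by (auto simp: U_def)
  have near_x: "\<forall>z\<in>U. Gdist (f z) (f x) < e \<and> size (f z) = size (f x)"
    using \<delta> size_f assms(5) by (auto simp: U_def dist_commute)
  define g where "g z = filter_mset Pr (f z)" for z
  define h where "h z = filter_mset (\<lambda>y. \<not> Pr y) (f z)" for z
  have g: "\<forall>z\<in>U. size (g z) = size (g x)" "Lip g Gdist U x \<le> Lip f Gdist \<Omega> x"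
    unfolding g_def by (rule Lip_filter_mset_le[OF \<open>U \<subseteq> \<Omega>\<close> near_x Pr])+
  have h: "\<forall>z\<in>U. size (h z) = size (h x)" "Lip h Gdist U x \<le> Lip f Gdist \<Omega> x"
    unfolding h_def by (rule Lip_filter_mset_le[OF \<open>U \<subseteq> \<Omega>\<close> near_x not_Pr])+
  have split: "f z = g z + h z" for z
    unfolding g_def h_def by (rule multiset_partition)
  show ?thesis
  proof (intro exI conjI)
    show "size (g x) > 0" "size (h x) > 0"
      unfolding g_def h_def by (fact sizes)+
    show "Q = size (g x) + size (h x)"
      using size_f[OF assms(5)] split[of x] by (metis size_union)
    show "\<forall>z\<in>U. g z \<in> AQ (size (g x)) \<and> h z \<in> AQ (size (h x)) \<and> f z = g z + h z"
      using g(1) h(1) split by (simp add: AQ_def)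
  qed (fact \<open>open U\<close> \<open>x \<in> U\<close> \<open>U \<subseteq> \<Omega>\<close> g(2) h(2))+
qed

end
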